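(* Let $x_1,x_2,x_3>0$, $\gamma,\delta>0$ with $\gamma\ne1\ne\delta$, and let $$\mathbf{Q}=\begin{pmatrix}1&\delta x_1&x_2&x_3\\ 1/(\delta x_1)&1&x_2/x_1&x_3/x_1\\ 1/x_2&x_1/x_2&1&\gamma x_3/x_2\\ 1/x_3&x_1/x_3&x_2/(\gamma x_3)&1\end{pmatrix}$$ with principal right eigenvector $\mathbf{w}^{EM}$. If $\delta<1$ and $\gamma>1$, then $w_2^{EM}/w_4^{EM}>x_3/x_1$.
   Context: The principal right eigenvector is the positive (Perron) eigenvector belonging to the largest eigenvalue. *)

theory Defs
  imports Complex_Main
begin

text \<open>Square matrices of size n are functions nat => nat => 'a, indexed by 1..n;
  vectors are functions nat => 'a indexed by 1..n.\<close>

definition is_eigenpair :: "nat \<Rightarrow> (nat \<Rightarrow> nat \<Rightarrow> complex) \<Rightarrow> complex \<Rightarrow> (nat \<Rightarrow> complex) \<Rightarrow> bool" where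
  "is_eigenpair n A \<mu> v \<longleftrightarrow>
     (\<exists>i\<in>{1..n}. v i \<noteq> 0) \<and> (\<forall>i\<in>{1..n}. (\<Sum>j=1..n. A i j * v j) = \<mu> * v i)"

definition principal_right_eigvec :: "nat \<Rightarrow> (nat \<Rightarrow> nat \<Rightarrow> real) \<Rightarrow> (nat \<Rightarrow> real) \<Rightarrow> bool" where
  "principal_right_eigvec n A w \<longleftrightarrow>
     (\<forall>i\<in>{1..n}. w i > 0) \<and>
     (\<exists>r::real. (\<forall>i\<in>{1..n}. (\<Sum>j=1..n. A i j * w j) = r * w i) \<and>
        (\<forall>\<mu> v. is_eigenpair n (\<lambda>i j. complex_of_real (A i j)) \<mu> v \<longrightarrow> cmod \<mu> \<le> r))"

definition Qmat :: "real \<Rightarrow> real \<Rightarrow> real \<Rightarrow> real \<Rightarrow> real \<Rightarrow> nat \<Rightarrow> nat \<Rightarrow> real" where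
  "Qmat x1 x2 x3 \<gamma> \<delta> i j =
     [[1, \<delta> * x1, x2, x3],
      [1 / (\<delta> * x1), 1, x2 / x1, x3 / x1],
      [1 / x2, x1 / x2, 1, \<gamma> * x3 / x2],
      [1 / x3, x1 / x3, x2 / (\<gamma> * x3), 1]] ! (i - 1) ! (j - 1)"

end

theory Submission
  imports Defs
begin

text \<open>Multiplied by
  \<open>x\<^sub>1\<close> and \<open>x\<^sub>3\<close> respectively, they read
  \<open>w\<^sub>1/\<delta> + x\<^sub>1 w\<^sub>2 + x\<^sub>2 w\<^sub>3 + x\<^sub>3 w\<^sub>4 = \<lambda> x\<^sub>1 w\<^sub>2\<close> and
  \<open>w\<^sub>1 + x\<^sub>1 w\<^sub>2 + x\<^sub>2 w\<^sub>3/\<gamma> + x\<^sub>3 w\<^sub>4 = \<lambda> x\<^sub>3 w\<^sub>4\<close>.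
  For \<open>\<delta> < 1 < \<gamma>\<close> the first left-hand side is the larger one, so \<open>x\<^sub>1 w\<^sub>2 > x\<^sub>3 w\<^sub>4\<close>
  because \<open>\<lambda> > 0\<close>.\<close>

lemma sum_atLeastAtMost_1_4:
  "(\<Sum>j=1..4. f j) = f (1::nat) + f 2 + f 3 + (f 4 :: 'a :: comm_monoid_add)"
  by (simp add: numeral_eq_Suc add.assoc)

lemma Qmat_row2_eigen:
  assumes "x1 > 0" "\<delta> > 0"
    and "(\<Sum>j=1..4. Qmat x1 x2 x3 \<gamma> \<delta> 2 j * w j) = r * w 2"
  shows "w 1 / \<delta> + x1 * w 2 + x2 * w 3 + x3 * w 4 = r * x1 * w 2"
proof -
  have "w 1 / (\<delta> * x1) + w 2 + x2 / x1 * w 3 + x3 / x1 * w 4 = r * w 2"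
    using assms(3) by (simp only: sum_atLeastAtMost_1_4) (simp add: Qmat_def)
  moreover have "w 1 / \<delta> + x1 * w 2 + x2 * w 3 + x3 * w 4
      = x1 * (w 1 / (\<delta> * x1) + w 2 + x2 / x1 * w 3 + x3 / x1 * w 4)"
    using assms(1,2) by (simp add: field_simps)
  ultimately show ?thesis
    by simp
qed

lemma Qmat_row4_eigen:
  assumes "x3 > 0" "\<gamma> > 0"
    and "(\<Sum>j=1..4. Qmat x1 x2 x3 \<gamma> \<delta> 4 j * w j) = r * w 4"
  shows "w 1 + x1 * w 2 + x2 * w 3 / \<gamma> + x3 * w 4 = r * x3 * w 4"
proof -
  have "w 1 / x3 + x1 / x3 * w 2 + x2 / (\<gamma> * x3) * w 3 + w 4 = r * w 4"
    using assms(3) by (simp only: sum_atLeastAtMost_1_4) (simp add: Qmat_def)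
  moreover have "w 1 + x1 * w 2 + x2 * w 3 / \<gamma> + x3 * w 4
      = x3 * (w 1 / x3 + x1 / x3 * w 2 + x2 / (\<gamma> * x3) * w 3 + w 4)"
    using assms(1,2) by (simp add: field_simps)
  ultimately show ?thesis
    by simp
qed

theorem mainTheorem15:
  fixes x1 x2 x3 \<gamma> \<delta> :: real and w :: "nat \<Rightarrow> real"
  assumes "x1 > 0" and "x2 > 0" and "x3 > 0"
    and "\<gamma> > 0" and "\<delta> > 0" and "\<gamma> \<noteq> 1" and "\<delta> \<noteq> 1"
    and "principal_right_eigvec 4 (Qmat x1 x2 x3 \<gamma> \<delta>) w"
    and "\<delta> < 1" and "\<gamma> > 1"
  shows "w 2 / w 4 > x3 / x1"
proof -
  obtain r where pos: "\<forall>i\<in>{1..4}. w i > 0"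
    and eigen: "\<forall>i\<in>{1..4}. (\<Sum>j=1..4. Qmat x1 x2 x3 \<gamma> \<delta> i j * w j) = r * w i"
    using assms(8) unfolding principal_right_eigvec_def by blast
  have w_pos: "w 1 > 0" "w 2 > 0" "w 3 > 0" "w 4 > 0"
    using pos by auto
  have row2: "w 1 / \<delta> + x1 * w 2 + x2 * w 3 + x3 * w 4 = r * x1 * w 2"
    using Qmat_row2_eigen[OF assms(1,5)] eigen[rule_format, of 2] by simp
  have row4: "w 1 + x1 * w 2 + x2 * w 3 / \<gamma> + x3 * w 4 = r * x3 * w 4"
    using Qmat_row4_eigen[OF assms(3,4)] eigen[rule_format, of 4] by simp
  have "w 1 < w 1 / \<delta>"
    using w_pos(1) assms(5,9) by (simp add: field_simps)
  moreover have "x2 * w 3 / \<gamma> < x2 * w 3"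
    using w_pos(3) assms(2,10) by (simp add: field_simps)
  ultimately have "r * (x3 * w 4) < r * (x1 * w 2)"
    using row2 row4 by (simp add: mult.assoc)
  moreover have "r > 0"
    using row4 w_pos assms(1,2,3,4) by (smt (verit) divide_pos_pos mult_pos_pos zero_less_mult_pos2)
  ultimately have "x3 * w 4 < x1 * w 2"
    by simp
  then show ?thesis
    using w_pos(4) assms(1) by (simp add: field_simps)
qed

end
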